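(* Fix a time $t\ge0$ and an evaluation policy $\pi_e$. Assume (common support) that for all $x,a$, $\pi_e(a\mid x)>0$ implies $\pi_0(a\mid x)>0$, and (conditional independent censoring) that $L$ and $C$ are conditionally independent given $(x,a)$. Assume $G(t\mid x,a)>0$ for all $x,a$, and consider the estimators with correctly specified propensity score, censoring model and outcome model: $$\hat V_{\mathrm{IPCW\text{-}IPS}}=\frac1n\sum_{i=1}^n w(x_i,a_i)\frac{\mathbb{I}\{T_i>t\}}{G(t\mid x_i,a_i)},$$ $$\hat V_{\mathrm{IPCW\text{-}DR}}=\frac1n\sum_{i=1}^n\Big(w(x_i,a_i)\Big(\frac{\mathbb{I}\{T_i>t\}}{G(t\mid x_i,a_i)}-S(x_i,a_i,t)\Big)+\sum_{a\in\mathcal{A}}\pi_e(a\mid x_i)S(x_i,a,t)\Big),$$ with $w(x,a)=\pi_e(a\mid x)/\pi_0(a\mid x)$. Let $\sigma^2(x,a,t)=S(x,a,t)/G(t\mid x,a)-S(x,a,t)^2$ and $S^{\pi_e}(x,t)=\mathbb{E}_{\pi_e(a\mid x)}[S(x,a,t)]$. Then $$n\,\mathbb{V}[\hat V_{\mathrm{IPCW\text{-}IPS}}]=\mathbb{E}_{p(x)\pi_0(a\mid x)}\big[w(x,a)^2\sigma^2(x,a,t)\big]+\mathbb{E}_{p(x)}\big[\mathbb{V}_{\pi_0(a\mid x)}[w(x,a)S(x,a,t)]\big]+\mathbb{V}_{p(x)}[S^{\pi_e}(x,t)],$$ $$n\,\mathbb{V}[\hat V_{\mathrm{IPCW\text{-}DR}}]=\mathbb{E}_{p(x)\pi_0(a\mid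 x)}\big[w(x,a)^2\sigma^2(x,a,t)\big]+\mathbb{V}_{p(x)}[S^{\pi_e}(x,t)].$$ Consequently $n\mathbb{V}[\hat V_{\mathrm{IPCW\text{-}IPS}}]-n\mathbb{V}[\hat V_{\mathrm{IPCW\text{-}DR}}]=\mathbb{E}_{p(x)}[\mathbb{V}_{\pi_0(a\mid x)}[w(x,a)S(x,a,t)]]\ge0$, so $\mathbb{V}[\hat V_{\mathrm{IPCW\text{-}DR}}]\le\mathbb{V}[\hat V_{\mathrm{IPCW\text{-}IPS}}]$.
   Context: Let $\mathcal{X}$ be a context space and $\mathcal{A}$ a finite action set. A policy $\pi(a\mid x)$ is a conditional distribution over $\mathcal{A}$ given $x$. The logged data $\mathcal{D}=\{(x_i,a_i,T_i,r_i)\}_{i=1}^n$ consists of $n$ i.i.d. draws generated by $(x,a,L,C)\sim p(x)\pi_0(a\mid x)p(L,C\mid x,a)$ for a logging policy $\pi_0$, where $L\ge0$ is the latent survival time, $C\ge0$ the censoring time, and only $T=\min\{L,C\}$ and $r=\mathbb{I}\{L\le C\}$ are observed. Define $S(x,a,t)=P(L>t\mid x,a)$ and $G(t\mid x,a)=P(C>t\mid x,a)$. Variances $\mathbb{V}$ of estimators are over the draw of $\mathcal{D}$. *)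

theory Defs
  imports "HOL-Probability.Probability"
begin

text \<open>Survival function S(x,a,t) = P(L > t | x,a) and censoring survival
  G(t | x,a) = P(C > t | x,a), where K x a is the conditional joint law of (L,C).\<close>
definition surv :: "('x \<Rightarrow> 'a \<Rightarrow> (real \<times> real) measure) \<Rightarrow> 'x \<Rightarrow> 'a \<Rightarrow> real \<Rightarrow> real" where
  "surv K x a t = measure (distr (K x a) borel fst) {t<..}"

definition cens :: "('x \<Rightarrow> 'a \<Rightarrow> (real \<times> real) measure) \<Rightarrow> real \<Rightarrow> 'x \<Rightarrow> 'a \<Rightarrow> real" where
  "cens K t x a = measure (distr (K x a) borel snd) {t<..}"

definition iw :: "('x \<Rightarrow> 'a \<Rightarrow> real) \<Rightarrow> ('x \<Rightarrow> 'a \<Rightarrow> real) \<Rightarrow> 'x \<Rightarrow> 'a \<Rightarrow> real" where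
  "iw pe p0 x a = pe x a / p0 x a"

definition is_policy :: "'x measure \<Rightarrow> ('x \<Rightarrow> 'a::finite \<Rightarrow> real) \<Rightarrow> bool" where
  "is_policy M p \<longleftrightarrow> (\<forall>a. (\<lambda>x. p x a) \<in> borel_measurable M) \<and>
     (\<forall>x\<in>space M. (\<forall>a. p x a \<ge> 0) \<and> (\<Sum>a\<in>UNIV. p x a) = 1)"

definition act_dist :: "('x \<Rightarrow> 'a \<Rightarrow> real) \<Rightarrow> 'x \<Rightarrow> 'a measure" where
  "act_dist p x = density (count_space UNIV) (\<lambda>a. ennreal (p x a))"

definition obs_space :: "'x measure \<Rightarrow> ('x \<times> 'a \<times> real \<times> bool) measure" where
  "obs_space M = M \<Otimes>\<^sub>M count_space UNIV \<Otimes>\<^sub>M borel \<Otimes>\<^sub>M count_space UNIV"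

definition obs_law :: "'x measure \<Rightarrow> ('x \<Rightarrow> 'a \<Rightarrow> real) \<Rightarrow> ('x \<Rightarrow> 'a \<Rightarrow> (real \<times> real) measure)
    \<Rightarrow> ('x \<times> 'a \<times> real \<times> bool) measure" where
  "obs_law M p0 K =
     M \<bind> (\<lambda>x. act_dist p0 x \<bind>
        (\<lambda>a. distr (K x a) (obs_space M) (\<lambda>(l, c). (x, a, min l c, l \<le> c))))"

definition data_law :: "nat \<Rightarrow> 'x measure \<Rightarrow> ('x \<Rightarrow> 'a \<Rightarrow> real) \<Rightarrow> ('x \<Rightarrow> 'a \<Rightarrow> (real \<times> real) measure)
    \<Rightarrow> (nat \<Rightarrow> 'x \<times> 'a \<times> real \<times> bool) measure" where
  "data_law n M p0 K = PiM {..<n} (\<lambda>_. obs_law M p0 K)"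

definition V_ips :: "nat \<Rightarrow> ('x \<Rightarrow> 'a \<Rightarrow> real) \<Rightarrow> ('x \<Rightarrow> 'a \<Rightarrow> real) \<Rightarrow> ('x \<Rightarrow> 'a \<Rightarrow> (real \<times> real) measure)
    \<Rightarrow> real \<Rightarrow> (nat \<Rightarrow> 'x \<times> 'a \<times> real \<times> bool) \<Rightarrow> real" where
  "V_ips n pe p0 K t D = (1 / real n) * (\<Sum>i<n. case D i of (x, a, T, r) \<Rightarrow>
      iw pe p0 x a * (if T > t then 1 else 0) / cens K t x a)"

definition V_dr :: "nat \<Rightarrow> ('x \<Rightarrow> 'a::finite \<Rightarrow> real) \<Rightarrow> ('x \<Rightarrow> 'a \<Rightarrow> real) \<Rightarrow> ('x \<Rightarrow> 'a \<Rightarrow> (real \<times> real) measure)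
    \<Rightarrow> real \<Rightarrow> (nat \<Rightarrow> 'x \<times> 'a \<times> real \<times> bool) \<Rightarrow> real" where
  "V_dr n pe p0 K t D = (1 / real n) * (\<Sum>i<n. case D i of (x, a, T, r) \<Rightarrow>
      iw pe p0 x a * ((if T > t then 1 else 0) / cens K t x a - surv K x a t)
      + (\<Sum>b\<in>UNIV. pe x b * surv K x b t))"

definition sigma2 :: "('x \<Rightarrow> 'a \<Rightarrow> (real \<times> real) measure) \<Rightarrow> 'x \<Rightarrow> 'a \<Rightarrow> real \<Rightarrow> real" where
  "sigma2 K x a t = surv K x a t / cens K t x a - (surv K x a t)\<^sup>2"

definition surv_pol :: "('x \<Rightarrow> 'a::finite \<Rightarrow> real) \<Rightarrow> ('x \<Rightarrow> 'a \<Rightarrow> (real \<times> real) measure) \<Rightarrow> 'x \<Rightarrow> real \<Rightarrow> real" where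
  "surv_pol pe K x t = (\<Sum>a\<in>UNIV. pe x a * surv K x a t)"

definition var_act :: "('x \<Rightarrow> 'a::finite \<Rightarrow> real) \<Rightarrow> 'x \<Rightarrow> ('a \<Rightarrow> real) \<Rightarrow> real" where
  "var_act p x f = (\<Sum>a\<in>UNIV. p x a * (f a)\<^sup>2) - (\<Sum>a\<in>UNIV. p x a * f a)\<^sup>2"

end

theory Submission
  imports Defs
begin

text \<open>Both estimators are sample means of n i.i.d. per-record terms, so n times their
  variance is the variance of a single term.  A term depends on the record (x, a, T, r) only
  through x, a and the indicator [T > t]; given (x, a), independent censoring makes this
  indicator Bernoulli with success probability S G.  Averaging over it, then over
  a ~ pi_0(.|x), then over x, both terms have mean E_x S^pi_e(x).  The IPS term has second
  moment E[w^2 S / G] = E[w^2 sigma^2] + E_x V_pi_0[w S] + E_x (S^pi_e)^2.  In the DR term the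
  correction w ([T > t] / G - S) has conditional mean zero given (x, a), so it is orthogonal to
  the baseline S^pi_e(x) and the middle summand disappears.\<close>

lemma integral_PiM_component:
  fixes h :: "'b \<Rightarrow> real"
  assumes Q: "prob_space Q" and i: "i \<in> I" and h: "integrable Q h"
  shows "integrable (PiM I (\<lambda>_. Q)) (\<lambda>D. h (D i))"
    and "(\<integral>D. h (D i) \<partial>PiM I (\<lambda>_. Q)) = integral\<^sup>L Q h"
proof -
  have comp: "(\<lambda>D. D i) \<in> measurable (PiM I (\<lambda>_. Q)) Q"
    using i by (rule measurable_component_singleton)
  have distr: "distr (PiM I (\<lambda>_. Q)) Q (\<lambda>D. D i) = Q"
    using Q i by (rule distr_PiM_component)
  have hm: "h \<in> borel_measurable Q" using h by simp
  show "integrable (PiM I (\<lambda>_. Q)) (\<lambda>D. h (D i))"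
    using integrable_distr_eq[OF comp hm] distr h by simp
  show "(\<integral>D. h (D i) \<partial>PiM I (\<lambda>_. Q)) = integral\<^sup>L Q h"
    using integral_distr[OF comp hm] distr by simp
qed

lemma integral_PiM_pair:
  fixes g h :: "'b \<Rightarrow> real"
  assumes Q: "prob_space Q" and I: "finite I" "i \<in> I" "j \<in> I" "i \<noteq> j"
    and g: "integrable Q g" and h: "integrable Q h"
  shows "integrable (PiM I (\<lambda>_. Q)) (\<lambda>D. g (D i) * h (D j))"
    and "(\<integral>D. g (D i) * h (D j) \<partial>PiM I (\<lambda>_. Q)) = integral\<^sup>L Q g * integral\<^sup>L Q h"
proof -
  interpret Q: prob_space Q by (rule Q)
  interpret product_prob_space "\<lambda>_. Q" I by unfold_locales
  define f where "f k = (if k = i then g else if k = j then h else (\<lambda>_. 1))" for k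
  have f: "integrable Q (f k)" for k
    using g h by (simp add: f_def)
  have "(\<Prod>k\<in>I. f k (D k)) = (\<Prod>k\<in>{i, j}. f k (D k))" for D
    using I by (intro prod.mono_neutral_right) (auto simp: f_def)
  then have prod_f: "(\<Prod>k\<in>I. f k (D k)) = g (D i) * h (D j)" for D
    using I by (simp add: f_def)
  have "(\<Prod>k\<in>I. integral\<^sup>L Q (f k)) = (\<Prod>k\<in>{i, j}. integral\<^sup>L Q (f k))"
    using I by (intro prod.mono_neutral_right) (auto simp: f_def Q.prob_space)
  then have prod_int: "(\<Prod>k\<in>I. integral\<^sup>L Q (f k)) = integral\<^sup>L Q g * integral\<^sup>L Q h"
    using I by (simp add: f_def)
  have "integrable (PiM I (\<lambda>_. Q)) (\<lambda>D. \<Prod>k\<in>I. f k (D k))"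
    using I(1) f by (rule product_integrable_prod)
  then show "integrable (PiM I (\<lambda>_. Q)) (\<lambda>D. g (D i) * h (D j))"
    by (simp add: prod_f)
  have "(\<integral>D. (\<Prod>k\<in>I. f k (D k)) \<partial>PiM I (\<lambda>_. Q)) = (\<Prod>k\<in>I. integral\<^sup>L Q (f k))"
    using I(1) f by (rule product_integral_prod)
  then show "(\<integral>D. g (D i) * h (D j) \<partial>PiM I (\<lambda>_. Q)) = integral\<^sup>L Q g * integral\<^sup>L Q h"
    by (simp add: prod_f prod_int)
qed

lemma integral_PiM_square_sum_centred:
  fixes g :: "'b \<Rightarrow> real"
  assumes Q: "prob_space Q" and g: "integrable Q g" and g2: "integrable Q (\<lambda>z. (g z)\<^sup>2)"
    and g_mean: "integral\<^sup>L Q g = 0"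
  shows "(\<integral>D. (\<Sum>i<n. g (D i))\<^sup>2 \<partial>PiM {..<n} (\<lambda>_. Q)) = real n * integral\<^sup>L Q (\<lambda>z. (g z)\<^sup>2)"
proof -
  let ?P = "PiM {..<n} (\<lambda>_. Q)"
  have cov_integrable: "integrable ?P (\<lambda>D. g (D i) * g (D j))"
    and cov: "(\<integral>D. g (D i) * g (D j) \<partial>?P) = (if i = j then integral\<^sup>L Q (\<lambda>z. (g z)\<^sup>2) else 0)"
    if "i < n" "j < n" for i j
    using integral_PiM_component[OF Q _ g2, of i "{..<n}"]
      integral_PiM_pair[OF Q _ _ _ _ g g, of "{..<n}" i j] that g_mean
    by (cases "i = j"; simp add: power2_eq_square)+
  have "(\<integral>D. (\<Sum>i<n. g (D i))\<^sup>2 \<partial>?P) = (\<integral>D. (\<Sum>i<n. \<Sum>j<n. g (D i) * g (D j)) \<partial>?P)"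
    by (simp add: power2_eq_square sum_product)
  also have "\<dots> = (\<Sum>i<n. \<integral>D. (\<Sum>j<n. g (D i) * g (D j)) \<partial>?P)"
    using cov_integrable by (intro Bochner_Integration.integral_sum Bochner_Integration.integrable_sum) auto
  also have "\<dots> = (\<Sum>i<n. \<Sum>j<n. \<integral>D. g (D i) * g (D j) \<partial>?P)"
    using cov_integrable by (intro sum.cong refl Bochner_Integration.integral_sum) auto
  also have "\<dots> = (\<Sum>i<n. \<Sum>j<n. if i = j then integral\<^sup>L Q (\<lambda>z. (g z)\<^sup>2) else 0)"
    using cov by (intro sum.cong refl) auto
  also have "\<dots> = real n * integral\<^sup>L Q (\<lambda>z. (g z)\<^sup>2)"
    by simp
  finally show ?thesis .
qed

lemma variance_sample_mean:
  fixes f :: "'b \<Rightarrow> real"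
  assumes Q: "prob_space Q" and f: "integrable Q f" and f2: "integrable Q (\<lambda>z. (f z)\<^sup>2)"
    and n: "1 \<le> n"
  shows "real n * prob_space.variance (PiM {..<n} (\<lambda>_. Q)) (\<lambda>D. (1 / real n) * (\<Sum>i<n. f (D i)))
    = prob_space.variance Q f"
proof -
  interpret Q: prob_space Q by (rule Q)
  interpret P: product_prob_space "\<lambda>_. Q" "{..<n}" by unfold_locales
  define g where "g z = f z - Q.expectation f" for z
  have g: "integrable Q g"
    unfolding g_def using f by auto
  have g2: "integrable Q (\<lambda>z. (g z)\<^sup>2)"
    unfolding g_def power2_diff using f f2
    by (intro Bochner_Integration.integrable_diff Bochner_Integration.integrable_add) auto
  have g_mean: "Q.expectation g = 0"
    unfolding g_def using f by (simp add: Q.prob_space)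
  have mean: "P.expectation (\<lambda>D. (1 / real n) * (\<Sum>i<n. f (D i))) = Q.expectation f"
    using integral_PiM_component[OF Q _ f, of _ "{..<n}"] n by simp
  have centred: "(1 / real n) * (\<Sum>i<n. f (D i)) - Q.expectation f = (1 / real n) * (\<Sum>i<n. g (D i))"
    for D
    using n by (simp add: g_def sum_subtractf field_simps)
  have "P.variance (\<lambda>D. (1 / real n) * (\<Sum>i<n. f (D i)))
      = P.expectation (\<lambda>D. (1 / real n)\<^sup>2 * (\<Sum>i<n. g (D i))\<^sup>2)"
    by (simp only: mean centred power_mult_distrib)
  also have "\<dots> = (1 / real n)\<^sup>2 * P.expectation (\<lambda>D. (\<Sum>i<n. g (D i))\<^sup>2)"
    by simp
  also have "\<dots> = Q.variance f / real n"
    using integral_PiM_square_sum_centred[OF Q g g2 g_mean] n by (simp add: g_def power2_eq_square)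
  finally show ?thesis
    using n by simp
qed

lemma is_policy_measurable: "is_policy M p \<Longrightarrow> (\<lambda>x. p x a) \<in> borel_measurable M"
  by (simp add: is_policy_def)

lemma is_policy_nonneg: "is_policy M p \<Longrightarrow> x \<in> space M \<Longrightarrow> 0 \<le> p x a"
  by (simp add: is_policy_def)

lemma is_policy_sum: "is_policy M p \<Longrightarrow> x \<in> space M \<Longrightarrow> (\<Sum>a\<in>UNIV. p x a) = 1"
  by (simp add: is_policy_def)

lemma sets_act_dist [simp]: "sets (act_dist p x) = sets (count_space UNIV)"
  by (simp add: act_dist_def)

lemma nn_integral_act_dist:
  fixes p :: "'x \<Rightarrow> 'a::finite \<Rightarrow> real"
  shows "(\<integral>\<^sup>+a. f a \<partial>act_dist p x) = (\<Sum>a\<in>UNIV. ennreal (p x a) * f a)"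
  unfolding act_dist_def point_measure_def[symmetric]
  by (simp add: nn_integral_point_measure_finite)

lemma emeasure_act_dist:
  fixes p :: "'x \<Rightarrow> 'a::finite \<Rightarrow> real"
  shows "emeasure (act_dist p x) A = (\<Sum>a\<in>A. ennreal (p x a))"
  unfolding act_dist_def point_measure_def[symmetric]
  by (simp add: emeasure_point_measure_finite)

lemma prob_space_act_dist:
  assumes "is_policy M p" "x \<in> space M"
  shows "prob_space (act_dist p x)"
proof
  have "emeasure (act_dist p x) UNIV = ennreal (\<Sum>a\<in>UNIV. p x a)"
    using assms by (simp add: emeasure_act_dist sum_ennreal is_policy_nonneg)
  then show "emeasure (act_dist p x) (space (act_dist p x)) = 1"
    using assms by (simp add: act_dist_def is_policy_sum)
qed

lemma measurable_act_dist:
  assumes p: "is_policy M p"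
  shows "act_dist p \<in> measurable M (subprob_algebra (count_space UNIV))"
proof (rule measurable_subprob_algebra)
  show "subprob_space (act_dist p x)" if "x \<in> space M" for x
    using prob_space_act_dist[OF p that] by (rule prob_space_imp_subprob_space)
  show "(\<lambda>x. emeasure (act_dist p x) A) \<in> borel_measurable M" for A
    using is_policy_measurable[OF p] by (simp add: emeasure_act_dist)
qed simp

definition observe :: "'x \<Rightarrow> 'a \<Rightarrow> real \<times> real \<Rightarrow> 'x \<times> 'a \<times> real \<times> bool" where
  "observe x a = (\<lambda>(l, c). (x, a, min l c, l \<le> c))"

lemma obs_law_observe:
  "obs_law M p0 K = M \<bind> (\<lambda>x. act_dist p0 x \<bind> (\<lambda>a. distr (K x a) (obs_space M) (observe x a)))"
  by (simp add: obs_law_def observe_def)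

lemma observe_uncurried_measurable:
  "(\<lambda>(x, lc). observe x a lc) \<in> measurable (M \<Otimes>\<^sub>M (borel \<Otimes>\<^sub>M borel)) (obs_space M)"
  unfolding obs_space_def observe_def by measurable

lemma observe_measurable:
  "x \<in> space M \<Longrightarrow> observe x a \<in> measurable (borel \<Otimes>\<^sub>M borel) (obs_space M)"
  unfolding obs_space_def observe_def by measurable

definition on_record :: "real \<Rightarrow> ('x \<Rightarrow> 'a \<Rightarrow> bool \<Rightarrow> real) \<Rightarrow> 'x \<times> 'a \<times> real \<times> bool \<Rightarrow> real" where
  "on_record t \<phi> = (\<lambda>(x, a, T, r). \<phi> x a (t < T))"

lemma on_record_observe: "on_record t \<phi> (observe x a lc) = \<phi> x a (lc \<in> {t<..} \<times> {t<..})"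
  by (cases lc) (simp add: on_record_def observe_def)

lemma measurable_on_record:
  fixes \<phi> :: "'x \<Rightarrow> 'a::countable \<Rightarrow> bool \<Rightarrow> real"
  assumes [measurable]: "\<And>a b. (\<lambda>x. \<phi> x a b) \<in> borel_measurable M"
  shows "on_record t \<phi> \<in> borel_measurable (obs_space M)"
proof -
  have "(\<lambda>z. \<phi> (fst z) (fst (snd z)) (t < fst (snd (snd z)))) \<in> borel_measurable (obs_space M)"
  proof (rule measurable_compose_countable'[where I=UNIV and g="\<lambda>z. fst (snd z)"])
    fix a :: 'a
    show "(\<lambda>z. \<phi> (fst z) a (t < fst (snd (snd z)))) \<in> borel_measurable (obs_space M)"
    proof (rule measurable_compose_countable'[where I=UNIV and g="\<lambda>z. t < fst (snd (snd z))"])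
      show "(\<lambda>z. \<phi> (fst z) a b) \<in> borel_measurable (obs_space M)" for b
        unfolding obs_space_def by measurable
      show "(\<lambda>z. t < fst (snd (snd z))) \<in> obs_space M \<rightarrow>\<^sub>M count_space UNIV"
        unfolding obs_space_def pred_def[symmetric] by measurable
    qed simp
    show "(\<lambda>z. fst (snd z)) \<in> obs_space M \<rightarrow>\<^sub>M count_space UNIV"
      unfolding obs_space_def by measurable
  qed simp_all
  then show ?thesis
    by (simp add: on_record_def case_prod_unfold)
qed

lemma on_record_comp: "f (on_record t \<phi> z) = on_record t (\<lambda>x a b. f (\<phi> x a b)) z"
  by (simp add: on_record_def split: prod.split)

lemma var_act_nonneg:
  assumes "\<And>a. 0 \<le> p x a" and "(\<Sum>a\<in>UNIV. p x a) = 1"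
  shows "0 \<le> var_act p x f"
proof -
  define m where "m = (\<Sum>a\<in>UNIV. p x a * f a)"
  have "0 \<le> (\<Sum>a\<in>UNIV. p x a * (f a - m)\<^sup>2)"
    using assms by (intro sum_nonneg) auto
  also have "\<dots> = (\<Sum>a\<in>UNIV. p x a * (f a)\<^sup>2) - 2 * m * (\<Sum>a\<in>UNIV. p x a * f a) + m\<^sup>2 * (\<Sum>a\<in>UNIV. p x a)"
    by (simp add: power2_diff algebra_simps sum.distrib sum_subtractf sum_distrib_left sum_distrib_right)
  also have "\<dots> = var_act p x f"
    using assms(2) by (simp add: var_act_def m_def power2_eq_square)
  finally show ?thesis .
qed

text \<open>With success probability q = S G, the correction w (I / G - S) has mean zero, so
  the cross term with the baseline B cancels.\<close>

lemma dr_second_moment_identity: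
  fixes S G w B :: real
  assumes "G \<noteq> 0"
  shows "S * G * (w * (1 / G - S) + B)\<^sup>2 + (1 - S * G) * (B - w * S)\<^sup>2 = w\<^sup>2 * (S / G - S\<^sup>2) + B\<^sup>2"
  using assms by (simp add: field_simps power2_eq_square)

locale censored_logging = prob_space M for M :: "'x measure" +
  fixes p0 :: "'x \<Rightarrow> 'a::finite \<Rightarrow> real"
    and K :: "'x \<Rightarrow> 'a \<Rightarrow> (real \<times> real) measure"
  assumes policy_p0: "is_policy M p0"
    and kernel_K: "\<And>a. (\<lambda>x. K x a) \<in> measurable M (prob_algebra (borel \<Otimes>\<^sub>M borel))"
    and indep_LC: "\<And>x a. x \<in> space M \<Longrightarrow>
                     K x a = distr (K x a) borel fst \<Otimes>\<^sub>M distr (K x a) borel snd"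
begin

lemma p0_measurable [measurable]: "(\<lambda>x. p0 x a) \<in> borel_measurable M"
  using policy_p0 by (rule is_policy_measurable)

lemma prob_space_K: "x \<in> space M \<Longrightarrow> prob_space (K x a)"
  and sets_K: "x \<in> space M \<Longrightarrow> sets (K x a) = sets (borel \<Otimes>\<^sub>M borel)"
  using measurable_space[OF kernel_K] by (auto simp: space_prob_algebra)

lemma space_K: "x \<in> space M \<Longrightarrow> space (K x a) = UNIV"
  using sets_eq_imp_space_eq[OF sets_K] by (simp add: space_pair_measure)

lemma observe_measurable_K: "x \<in> space M \<Longrightarrow> observe x a \<in> measurable (K x a) (obs_space M)"
  using observe_measurable[of x M a] sets_K by (simp cong: measurable_cong_sets)

lemma measurable_distr_observe:
  "(\<lambda>x. distr (K x a) (obs_space M) (observe x a)) \<in> measurable M (subprob_algebra (obs_space M))"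
proof (subst measurable_cong)
  fix x assume x: "x \<in> space M"
  show "distr (K x a) (obs_space M) (observe x a)
      = K x a \<bind> (\<lambda>lc. return (obs_space M) ((\<lambda>(x, lc). observe x a lc) (x, lc)))"
    using bind_return_distr'[OF _ observe_measurable_K[OF x]] prob_space.not_empty[OF prob_space_K[OF x]]
    by simp
next
  show "(\<lambda>x. K x a \<bind> (\<lambda>lc. return (obs_space M) ((\<lambda>(x, lc). observe x a lc) (x, lc))))
      \<in> measurable M (subprob_algebra (obs_space M))"
    using measurable_compose[OF observe_uncurried_measurable[where M=M and a=a] return_measurable]
    by (intro measurable_bind'[OF measurable_prob_algebraD[OF kernel_K]])
       (simp add: comp_def case_prod_unfold)
qed

definition record_law :: "'x \<Rightarrow> ('x \<times> 'a \<times> real \<times> bool) measure" where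
  "record_law x = act_dist p0 x \<bind> (\<lambda>a. distr (K x a) (obs_space M) (observe x a))"

lemma obs_law_bind_record_law: "obs_law M p0 K = M \<bind> record_law"
  unfolding obs_law_observe record_law_def ..

lemma measurable_distr_observe_act_dist:
  "x \<in> space M \<Longrightarrow> (\<lambda>a. distr (K x a) (obs_space M) (observe x a))
     \<in> measurable (act_dist p0 x) (subprob_algebra (obs_space M))"
  using measurable_space[OF measurable_distr_observe]
  by (simp add: measurable_cong_sets[OF sets_act_dist refl])

lemma measurable_record_law: "record_law \<in> measurable M (subprob_algebra (obs_space M))"
  unfolding record_law_def
proof (rule measurable_bind'[OF measurable_act_dist[OF policy_p0]])
  have "(\<lambda>y. distr (K (fst y) (snd y)) (obs_space M) (observe (fst y) (snd y)))
      \<in> measurable (M \<Otimes>\<^sub>M count_space UNIV) (subprob_algebra (obs_space M))"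
    by (rule measurable_compose_countable'[where I=UNIV and g=snd])
       (auto intro: measurable_compose[OF measurable_fst measurable_distr_observe])
  then show "(\<lambda>(x, a). distr (K x a) (obs_space M) (observe x a))
      \<in> measurable (M \<Otimes>\<^sub>M count_space UNIV) (subprob_algebra (obs_space M))"
    by (simp add: case_prod_beta')
qed

lemma prob_space_record_law: "x \<in> space M \<Longrightarrow> prob_space (record_law x)"
  unfolding record_law_def
  by (rule prob_space.prob_space_bind[OF prob_space_act_dist[OF policy_p0] _
        measurable_distr_observe_act_dist])
     (auto intro: prob_space.prob_space_distr prob_space_K observe_measurable_K)

lemma prob_space_obs_law: "prob_space (obs_law M p0 K)"
  unfolding obs_law_bind_record_law
  by (rule prob_space_bind[OF _ measurable_record_law]) (auto intro: prob_space_record_law)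

lemma sets_obs_law: "sets (obs_law M p0 K) = sets (obs_space M)"
  unfolding obs_law_bind_record_law
  by (rule sets_bind[OF sets_kernel[OF measurable_record_law] not_empty])

lemma nn_integral_obs_law:
  assumes f: "f \<in> borel_measurable (obs_space M)"
  shows "(\<integral>\<^sup>+z. f z \<partial>obs_law M p0 K)
    = (\<integral>\<^sup>+x. (\<Sum>a\<in>UNIV. ennreal (p0 x a) * (\<integral>\<^sup>+lc. f (observe x a lc) \<partial>K x a)) \<partial>M)"
  unfolding obs_law_bind_record_law nn_integral_bind[OF f measurable_record_law]
proof (rule nn_integral_cong)
  fix x assume x: "x \<in> space M"
  have "(\<integral>\<^sup>+z. f z \<partial>record_law x)
      = (\<integral>\<^sup>+a. (\<integral>\<^sup>+z. f z \<partial>distr (K x a) (obs_space M) (observe x a)) \<partial>act_dist p0 x)"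
    unfolding record_law_def using f measurable_distr_observe_act_dist[OF x] by (rule nn_integral_bind)
  also have "\<dots> = (\<Sum>a\<in>UNIV. ennreal (p0 x a) * (\<integral>\<^sup>+lc. f (observe x a lc) \<partial>K x a))"
    using f observe_measurable_K[OF x] by (simp add: nn_integral_act_dist nn_integral_distr)
  finally show "(\<integral>\<^sup>+z. f z \<partial>record_law x)
      = (\<Sum>a\<in>UNIV. ennreal (p0 x a) * (\<integral>\<^sup>+lc. f (observe x a lc) \<partial>K x a))" .
qed

lemma surv_eq_measure:
  assumes x: "x \<in> space M"
  shows "surv K x a t = measure (K x a) ({t<..} \<times> UNIV)"
proof -
  have "fst -` {t<..} \<inter> space (K x a) = {t<..} \<times> UNIV"
    using space_K[OF x] by auto
  then show ?thesis
    unfolding surv_def using sets_K[OF x] by (subst measure_distr) (auto cong: measurable_cong_sets)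
qed

lemma cens_eq_measure:
  assumes x: "x \<in> space M"
  shows "cens K t x a = measure (K x a) (UNIV \<times> {t<..})"
proof -
  have "snd -` {t<..} \<inter> space (K x a) = UNIV \<times> {t<..}"
    using space_K[OF x] by auto
  then show ?thesis
    unfolding cens_def using sets_K[OF x] by (subst measure_distr) (auto cong: measurable_cong_sets)
qed

lemma surv_measurable [measurable]: "(\<lambda>x. surv K x a t) \<in> borel_measurable M"
proof -
  have "(\<lambda>x. measure (K x a) ({t<..} \<times> UNIV)) \<in> borel_measurable M"
    by (rule measurable_compose[OF kernel_K measurable_measure_prob_algebra]) simp
  then show ?thesis
    by (rule measurable_cong[THEN iffD1, rotated]) (simp add: surv_eq_measure)
qed

lemma cens_measurable [measurable]: "(\<lambda>x. cens K t x a) \<in> borel_measurable M"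
proof -
  have "(\<lambda>x. measure (K x a) (UNIV \<times> {t<..})) \<in> borel_measurable M"
    by (rule measurable_compose[OF kernel_K measurable_measure_prob_algebra]) simp
  then show ?thesis
    by (rule measurable_cong[THEN iffD1, rotated]) (simp add: cens_eq_measure)
qed

lemma surv_bounds: "x \<in> space M \<Longrightarrow> 0 \<le> surv K x a t \<and> surv K x a t \<le> 1"
  using prob_space.prob_le_1[OF prob_space_K] by (simp add: surv_eq_measure)

lemma cens_bounds: "x \<in> space M \<Longrightarrow> 0 \<le> cens K t x a \<and> cens K t x a \<le> 1"
  using prob_space.prob_le_1[OF prob_space_K] by (simp add: cens_eq_measure)

text \<open>T > t iff L > t and C > t; by independent censoring this has probability S G.\<close>

definition at_risk :: "real \<Rightarrow> 'x \<Rightarrow> 'a \<Rightarrow> real" where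
  "at_risk t x a = surv K x a t * cens K t x a"

lemma emeasure_at_risk:
  assumes x: "x \<in> space M"
  shows "emeasure (K x a) ({t<..} \<times> {t<..}) = at_risk t x a"
proof -
  interpret L: prob_space "distr (K x a) borel fst"
    using prob_space_K[OF x] sets_K[OF x]
    by (auto intro: prob_space.prob_space_distr cong: measurable_cong_sets)
  interpret C: prob_space "distr (K x a) borel snd"
    using prob_space_K[OF x] sets_K[OF x]
    by (auto intro: prob_space.prob_space_distr cong: measurable_cong_sets)
  have "emeasure (K x a) ({t<..} \<times> {t<..})
      = emeasure (distr (K x a) borel fst) {t<..} * emeasure (distr (K x a) borel snd) {t<..}"
    by (subst indep_LC[OF x]) (rule C.emeasure_pair_measure_Times; simp)
  then show ?thesis
    by (simp add: L.emeasure_eq_measure C.emeasure_eq_measure at_risk_def surv_def cens_def ennreal_mult)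
qed

lemma at_risk_bounds: "x \<in> space M \<Longrightarrow> 0 \<le> at_risk t x a \<and> at_risk t x a \<le> 1"
  using surv_bounds cens_bounds by (simp add: at_risk_def mult_le_one)

lemma emeasure_not_at_risk:
  assumes x: "x \<in> space M"
  shows "emeasure (K x a) (UNIV - {t<..} \<times> {t<..}) = 1 - at_risk t x a"
proof -
  interpret Kxa: prob_space "K x a" using prob_space_K[OF x] .
  have E: "{t<..} \<times> {t<..} \<in> sets (K x a)" using sets_K[OF x] by simp
  have "measure (K x a) ({t<..} \<times> {t<..}) = at_risk t x a"
    using emeasure_at_risk[OF x, where a=a and t=t] at_risk_bounds[OF x, where a=a and t=t]
    by (simp add: Kxa.emeasure_eq_measure)
  then show ?thesis
    using Kxa.prob_compl[OF E] space_K[OF x] by (simp add: Kxa.emeasure_eq_measure)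
qed

definition mean_given_context :: "real \<Rightarrow> ('x \<Rightarrow> 'a \<Rightarrow> bool \<Rightarrow> real) \<Rightarrow> 'x \<Rightarrow> real" where
  "mean_given_context t \<phi> x =
     (\<Sum>a\<in>UNIV. p0 x a * (at_risk t x a * \<phi> x a True + (1 - at_risk t x a) * \<phi> x a False))"

lemma mean_given_context_nonneg:
  assumes "\<And>a b. 0 \<le> \<phi> x a b" and x: "x \<in> space M"
  shows "0 \<le> mean_given_context t \<phi> x"
  unfolding mean_given_context_def using assms at_risk_bounds[OF x] is_policy_nonneg[OF policy_p0 x]
  by (intro sum_nonneg) auto

lemma nn_integral_K_on_record:
  assumes nn: "\<And>b. 0 \<le> \<phi> x a b" and x: "x \<in> space M"
  shows "(\<integral>\<^sup>+lc. on_record t \<phi> (observe x a lc) \<partial>K x a)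
    = at_risk t x a * \<phi> x a True + (1 - at_risk t x a) * \<phi> x a False"
proof -
  let ?E = "{t<..} \<times> {t<..} :: (real \<times> real) set"
  have E: "?E \<in> sets (K x a)"
    using sets_K[OF x] by simp
  then have E_compl: "UNIV - ?E \<in> sets (K x a)"
    using sets.compl_sets space_K[OF x] by metis
  have "(\<integral>\<^sup>+lc. on_record t \<phi> (observe x a lc) \<partial>K x a)
      = (\<integral>\<^sup>+lc. ennreal (\<phi> x a True) * indicator ?E lc
          + ennreal (\<phi> x a False) * indicator (UNIV - ?E) lc \<partial>K x a)"
    by (intro nn_integral_cong) (simp add: on_record_observe indicator_def)
  also have "\<dots> = \<phi> x a True * emeasure (K x a) ?E + \<phi> x a False * emeasure (K x a) (UNIV - ?E)"
    using E E_compl by (subst nn_integral_add) (auto simp: nn_integral_cmult_indicator)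
  also have "\<dots> = at_risk t x a * \<phi> x a True + (1 - at_risk t x a) * \<phi> x a False"
    using emeasure_at_risk[OF x] emeasure_not_at_risk[OF x] at_risk_bounds[OF x] nn
    by (simp add: ennreal_mult[symmetric] ennreal_plus[symmetric] mult.commute del: ennreal_plus)
  finally show ?thesis .
qed

lemma nn_integral_obs_law_on_record:
  assumes [measurable]: "\<And>a b. (\<lambda>x. \<phi> x a b) \<in> borel_measurable M"
    and nn: "\<And>x a b. x \<in> space M \<Longrightarrow> 0 \<le> \<phi> x a b"
  shows "(\<integral>\<^sup>+z. on_record t \<phi> z \<partial>obs_law M p0 K) = (\<integral>\<^sup>+x. mean_given_context t \<phi> x \<partial>M)"
proof -
  have "(\<lambda>z. ennreal (on_record t \<phi> z)) \<in> borel_measurable (obs_space M)"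
    using measurable_on_record[of \<phi> M t] by simp
  then have "(\<integral>\<^sup>+z. on_record t \<phi> z \<partial>obs_law M p0 K)
      = (\<integral>\<^sup>+x. (\<Sum>a\<in>UNIV. ennreal (p0 x a) * (\<integral>\<^sup>+lc. on_record t \<phi> (observe x a lc) \<partial>K x a)) \<partial>M)"
    by (rule nn_integral_obs_law)
  also have "\<dots> = (\<integral>\<^sup>+x. mean_given_context t \<phi> x \<partial>M)"
  proof (rule nn_integral_cong)
    fix x assume x: "x \<in> space M"
    have "(\<Sum>a\<in>UNIV. ennreal (p0 x a) * (\<integral>\<^sup>+lc. on_record t \<phi> (observe x a lc) \<partial>K x a))
        = (\<Sum>a\<in>UNIV. ennreal (p0 x a * (at_risk t x a * \<phi> x a True + (1 - at_risk t x a) * \<phi> x a False)))"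
      using nn_integral_K_on_record[where \<phi>=\<phi>, OF nn[OF x] x] is_policy_nonneg[OF policy_p0 x]
      by (simp add: ennreal_mult')
    also have "\<dots> = mean_given_context t \<phi> x"
      unfolding mean_given_context_def
      using at_risk_bounds[OF x] is_policy_nonneg[OF policy_p0 x] nn[OF x]
      by (intro sum_ennreal) auto
    finally show "(\<Sum>a\<in>UNIV. ennreal (p0 x a) * (\<integral>\<^sup>+lc. on_record t \<phi> (observe x a lc) \<partial>K x a))
        = mean_given_context t \<phi> x" .
  qed
  finally show ?thesis .
qed

lemma integral_obs_law_on_record:
  assumes [measurable]: "\<And>a b. (\<lambda>x. \<phi> x a b) \<in> borel_measurable M"
    and nn: "\<And>x a b. x \<in> space M \<Longrightarrow> 0 \<le> \<phi> x a b"
    and mean: "\<And>x. x \<in> space M \<Longrightarrow> mean_given_context t \<phi> x = g x"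
    and g: "integrable M g"
  shows "integrable (obs_law M p0 K) (on_record t \<phi>)"
    and "(\<integral>z. on_record t \<phi> z \<partial>obs_law M p0 K) = (\<integral>x. g x \<partial>M)"
proof -
  have int: "integrable M (mean_given_context t \<phi>)"
    using g mean by (auto intro: Bochner_Integration.integrable_cong[THEN iffD2, OF refl])
  have mean_integral: "(\<integral>x. mean_given_context t \<phi> x \<partial>M) = (\<integral>x. g x \<partial>M)"
    using mean by (rule Bochner_Integration.integral_cong[OF refl])
  have meas: "on_record t \<phi> \<in> borel_measurable (obs_law M p0 K)"
    using measurable_on_record[of \<phi> M t] by (simp cong: measurable_cong_sets add: sets_obs_law)
  have "space (obs_law M p0 K) = space (obs_space M)"
    using sets_obs_law by (rule sets_eq_imp_space_eq)
  then have on_record_nonneg: "AE z in obs_law M p0 K. 0 \<le> on_record t \<phi> z"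
    using nn by (auto simp: obs_space_def space_pair_measure on_record_def)
  have mean_nonneg: "AE x in M. 0 \<le> mean_given_context t \<phi> x"
    using nn by (auto intro!: AE_I2 mean_given_context_nonneg)
  have nn_eq: "(\<integral>\<^sup>+z. on_record t \<phi> z \<partial>obs_law M p0 K) = ennreal (\<integral>x. mean_given_context t \<phi> x \<partial>M)"
    using nn_integral_obs_law_on_record[of \<phi>] nn nn_integral_eq_integral[OF int mean_nonneg] by simp
  show "integrable (obs_law M p0 K) (on_record t \<phi>)"
    using meas on_record_nonneg nn_eq by (intro integrableI_nonneg) auto
  show "(\<integral>z. on_record t \<phi> z \<partial>obs_law M p0 K) = (\<integral>x. g x \<partial>M)"
    using integral_eq_nn_integral[OF meas on_record_nonneg] nn_eq integral_nonneg_AE[OF mean_nonneg]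
      mean_integral
    by simp
qed

lemma mean_given_context_const:
  "mean_given_context t (\<lambda>x a b. \<psi> x a) x = (\<Sum>a\<in>UNIV. p0 x a * \<psi> x a)"
  unfolding mean_given_context_def by (simp add: algebra_simps)

end

locale censored_off_policy = censored_logging M p0 K
  for M :: "'x measure" and p0 :: "'x \<Rightarrow> 'a::finite \<Rightarrow> real" and K +
  fixes pe :: "'x \<Rightarrow> 'a \<Rightarrow> real" and t :: real
  assumes policy_pe: "is_policy M pe"
    and support: "\<And>x a. x \<in> space M \<Longrightarrow> pe x a > 0 \<Longrightarrow> p0 x a > 0"
    and cens_pos: "\<And>x a. x \<in> space M \<Longrightarrow> cens K t x a > 0"
    and finite_second_moment:
      "integrable M (\<lambda>x. \<Sum>a\<in>UNIV. p0 x a * (iw pe p0 x a)\<^sup>2 * surv K x a t / cens K t x a)"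
begin

lemma pe_measurable [measurable]: "(\<lambda>x. pe x a) \<in> borel_measurable M"
  using policy_pe by (rule is_policy_measurable)

lemma iw_measurable [measurable]: "(\<lambda>x. iw pe p0 x a) \<in> borel_measurable M"
  unfolding iw_def by measurable

lemma iw_nonneg: "x \<in> space M \<Longrightarrow> 0 \<le> iw pe p0 x a"
  unfolding iw_def using is_policy_nonneg[OF policy_pe] is_policy_nonneg[OF policy_p0] by simp

lemma cens_nonzero: "x \<in> space M \<Longrightarrow> cens K t x a \<noteq> 0"
  using cens_pos[of x a] by simp

lemma p0_mult_iw: "x \<in> space M \<Longrightarrow> p0 x a * iw pe p0 x a = pe x a"
  using support[of x a] is_policy_nonneg[OF policy_pe, of x a]
  by (cases "p0 x a = 0") (auto simp: iw_def less_eq_real_def)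

lemma weighted_surv_mean:
  "x \<in> space M \<Longrightarrow> (\<Sum>a\<in>UNIV. p0 x a * (iw pe p0 x a * surv K x a t)) = surv_pol pe K x t"
  unfolding surv_pol_def by (simp add: p0_mult_iw mult.assoc[symmetric])

lemma surv_pol_measurable [measurable]: "(\<lambda>x. surv_pol pe K x t) \<in> borel_measurable M"
  unfolding surv_pol_def by measurable

lemma surv_pol_bounds: "x \<in> space M \<Longrightarrow> 0 \<le> surv_pol pe K x t \<and> surv_pol pe K x t \<le> 1"
proof -
  assume x: "x \<in> space M"
  have "0 \<le> surv_pol pe K x t" "surv_pol pe K x t \<le> (\<Sum>a\<in>UNIV. pe x a)"
    unfolding surv_pol_def using surv_bounds[OF x] is_policy_nonneg[OF policy_pe x]
    by (auto intro!: sum_nonneg sum_mono simp: mult_left_le)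
  then show ?thesis
    using is_policy_sum[OF policy_pe x] by simp
qed

lemma integrable_surv_pol: "integrable M (\<lambda>x. surv_pol pe K x t)"
  and integrable_surv_pol_sq: "integrable M (\<lambda>x. (surv_pol pe K x t)\<^sup>2)"
  using surv_pol_bounds
  by (auto intro!: integrable_const_bound[where B=1] simp: surv_pol_def abs_le_iff power_le_one)

lemma sigma2_nonneg: "x \<in> space M \<Longrightarrow> 0 \<le> sigma2 K x a t"
proof -
  assume x: "x \<in> space M"
  have S: "0 \<le> surv K x a t" "surv K x a t \<le> 1" and G: "0 < cens K t x a" "cens K t x a \<le> 1"
    using surv_bounds[OF x] cens_bounds[OF x] cens_pos[OF x] by auto
  have "(surv K x a t)\<^sup>2 \<le> surv K x a t"
    using S by (simp add: power2_eq_square mult_left_le)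
  also have "\<dots> \<le> surv K x a t / cens K t x a"
    using S G by (simp add: le_divide_eq mult_left_le)
  finally show ?thesis
    by (simp add: sigma2_def)
qed

definition ips_term :: "'x \<Rightarrow> 'a \<Rightarrow> bool \<Rightarrow> real" where
  "ips_term x a b = iw pe p0 x a * (if b then 1 else 0) / cens K t x a"

definition dr_term :: "'x \<Rightarrow> 'a \<Rightarrow> bool \<Rightarrow> real" where
  "dr_term x a b =
     iw pe p0 x a * ((if b then 1 else 0) / cens K t x a - surv K x a t) + surv_pol pe K x t"

lemma V_ips_eq: "V_ips n pe p0 K t = (\<lambda>D. (1 / real n) * (\<Sum>i<n. on_record t ips_term (D i)))"
  unfolding V_ips_def ips_term_def on_record_def ..

lemma V_dr_eq: "V_dr n pe p0 K t = (\<lambda>D. (1 / real n) * (\<Sum>i<n. on_record t dr_term (D i)))"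
  unfolding V_dr_def dr_term_def surv_pol_def on_record_def ..

lemma ips_term_measurable [measurable]: "(\<lambda>x. ips_term x a b) \<in> borel_measurable M"
  unfolding ips_term_def by measurable

lemma dr_term_measurable [measurable]: "(\<lambda>x. dr_term x a b) \<in> borel_measurable M"
  unfolding dr_term_def surv_pol_def by measurable

lemma ips_term_nonneg: "x \<in> space M \<Longrightarrow> 0 \<le> ips_term x a b"
  unfolding ips_term_def using iw_nonneg[of x a] cens_pos[of x a] by simp

lemma mean_given_context_ips:
  assumes x: "x \<in> space M"
  shows "mean_given_context t ips_term x = surv_pol pe K x t"
proof -
  have "mean_given_context t ips_term x = (\<Sum>a\<in>UNIV. p0 x a * (iw pe p0 x a * surv K x a t))"
    unfolding mean_given_context_def at_risk_def ips_term_def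
    by (intro sum.cong refl) (simp add: field_simps cens_nonzero[OF x])
  then show ?thesis
    using weighted_surv_mean[OF x] by simp
qed

lemma mean_given_context_ips_sq:
  assumes x: "x \<in> space M"
  shows "mean_given_context t (\<lambda>x a b. (ips_term x a b)\<^sup>2) x
     = (\<Sum>a\<in>UNIV. p0 x a * (iw pe p0 x a)\<^sup>2 * surv K x a t / cens K t x a)"
  unfolding mean_given_context_def at_risk_def ips_term_def
  by (intro sum.cong refl) (simp add: field_simps power2_eq_square cens_nonzero[OF x])

lemma ips_second_moment_decomposition:
  assumes x: "x \<in> space M"
  shows "(\<Sum>a\<in>UNIV. p0 x a * (iw pe p0 x a)\<^sup>2 * surv K x a t / cens K t x a)
     = (\<Sum>a\<in>UNIV. p0 x a * ((iw pe p0 x a)\<^sup>2 * sigma2 K x a t))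
       + var_act p0 x (\<lambda>a. iw pe p0 x a * surv K x a t) + (surv_pol pe K x t)\<^sup>2"
proof -
  have "(\<Sum>a\<in>UNIV. p0 x a * (iw pe p0 x a)\<^sup>2 * surv K x a t / cens K t x a)
      = (\<Sum>a\<in>UNIV. p0 x a * ((iw pe p0 x a)\<^sup>2 * sigma2 K x a t))
        + (\<Sum>a\<in>UNIV. p0 x a * (iw pe p0 x a * surv K x a t)\<^sup>2)"
    unfolding sum.distrib[symmetric] sigma2_def
    by (intro sum.cong refl) (simp add: algebra_simps power_mult_distrib)
  then show ?thesis
    unfolding var_act_def weighted_surv_mean[OF x] by simp
qed

lemma mean_given_context_dr_sq:
  assumes x: "x \<in> space M"
  shows "mean_given_context t (\<lambda>x a b. (dr_term x a b)\<^sup>2) x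
     = (\<Sum>a\<in>UNIV. p0 x a * ((iw pe p0 x a)\<^sup>2 * sigma2 K x a t)) + (surv_pol pe K x t)\<^sup>2"
proof -
  have "mean_given_context t (\<lambda>x a b. (dr_term x a b)\<^sup>2) x
      = (\<Sum>a\<in>UNIV. p0 x a * ((iw pe p0 x a)\<^sup>2 * sigma2 K x a t) + p0 x a * (surv_pol pe K x t)\<^sup>2)"
    unfolding mean_given_context_def at_risk_def
  proof (intro sum.cong refl)
    fix a
    have dr_true: "dr_term x a True = iw pe p0 x a * (1 / cens K t x a - surv K x a t) + surv_pol pe K x t"
      and dr_false: "dr_term x a False = surv_pol pe K x t - iw pe p0 x a * surv K x a t"
      by (simp_all add: dr_term_def)
    show "p0 x a * (surv K x a t * cens K t x a * (dr_term x a True)\<^sup>2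
          + (1 - surv K x a t * cens K t x a) * (dr_term x a False)\<^sup>2)
        = p0 x a * ((iw pe p0 x a)\<^sup>2 * sigma2 K x a t) + p0 x a * (surv_pol pe K x t)\<^sup>2"
      unfolding dr_true dr_false dr_second_moment_identity[OF cens_nonzero[OF x]]
      by (simp add: sigma2_def distrib_left)
  qed
  also have "\<dots> = (\<Sum>a\<in>UNIV. p0 x a * ((iw pe p0 x a)\<^sup>2 * sigma2 K x a t)) + (surv_pol pe K x t)\<^sup>2"
    using is_policy_sum[OF policy_p0 x] by (simp add: sum.distrib sum_distrib_right[symmetric])
  finally show ?thesis .
qed

lemma integrable_weighted_sigma2:
  "integrable M (\<lambda>x. \<Sum>a\<in>UNIV. p0 x a * ((iw pe p0 x a)\<^sup>2 * sigma2 K x a t))" (is "integrable M ?A")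
  and integrable_var_act:
  "integrable M (\<lambda>x. var_act p0 x (\<lambda>a. iw pe p0 x a * surv K x a t))" (is "integrable M ?B")
proof -
  let ?F = "\<lambda>x. \<Sum>a\<in>UNIV. p0 x a * (iw pe p0 x a)\<^sup>2 * surv K x a t / cens K t x a"
  have [measurable]: "(\<lambda>x. sigma2 K x a t) \<in> borel_measurable M" for a
    unfolding sigma2_def by measurable
  have "?A \<in> borel_measurable M"
    by measurable
  moreover have "?B \<in> borel_measurable M"
    unfolding var_act_def by measurable
  moreover have "norm (?A x) \<le> norm (?F x) \<and> norm (?B x) \<le> norm (?F x)" if x: "x \<in> space M" for x
  proof -
    have "0 \<le> ?A x"
      using sigma2_nonneg[OF x] is_policy_nonneg[OF policy_p0 x] by (simp add: sum_nonneg)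
    moreover have "0 \<le> ?B x"
      using is_policy_nonneg[OF policy_p0 x] is_policy_sum[OF policy_p0 x] by (rule var_act_nonneg)
    moreover have "?A x + ?B x \<le> ?F x"
      using ips_second_moment_decomposition[OF x] by simp
    ultimately show ?thesis
      by simp
  qed
  ultimately show "integrable M ?A" "integrable M ?B"
    by (auto intro: Bochner_Integration.integrable_bound[OF finite_second_moment])
qed

lemma ips_record_moments:
  "integrable (obs_law M p0 K) (on_record t ips_term)"
  "(\<integral>z. on_record t ips_term z \<partial>obs_law M p0 K) = (\<integral>x. surv_pol pe K x t \<partial>M)"
  "integrable (obs_law M p0 K) (\<lambda>z. (on_record t ips_term z)\<^sup>2)"
  "(\<integral>z. (on_record t ips_term z)\<^sup>2 \<partial>obs_law M p0 K)
     = (\<integral>x. (\<Sum>a\<in>UNIV. p0 x a * ((iw pe p0 x a)\<^sup>2 * sigma2 K x a t)) \<partial>M)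
       + (\<integral>x. var_act p0 x (\<lambda>a. iw pe p0 x a * surv K x a t) \<partial>M)
       + (\<integral>x. (surv_pol pe K x t)\<^sup>2 \<partial>M)"
proof -
  show "integrable (obs_law M p0 K) (on_record t ips_term)"
    "(\<integral>z. on_record t ips_term z \<partial>obs_law M p0 K) = (\<integral>x. surv_pol pe K x t \<partial>M)"
    using integral_obs_law_on_record[of ips_term, OF _ ips_term_nonneg mean_given_context_ips
        integrable_surv_pol]
    by simp_all
  have "mean_given_context t (\<lambda>x a b. (ips_term x a b)\<^sup>2) x
      = (\<Sum>a\<in>UNIV. p0 x a * ((iw pe p0 x a)\<^sup>2 * sigma2 K x a t))
        + var_act p0 x (\<lambda>a. iw pe p0 x a * surv K x a t) + (surv_pol pe K x t)\<^sup>2"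
    if "x \<in> space M" for x
    using mean_given_context_ips_sq[OF that] ips_second_moment_decomposition[OF that] by simp
  moreover have "integrable M (\<lambda>x. (\<Sum>a\<in>UNIV. p0 x a * ((iw pe p0 x a)\<^sup>2 * sigma2 K x a t))
      + var_act p0 x (\<lambda>a. iw pe p0 x a * surv K x a t) + (surv_pol pe K x t)\<^sup>2)"
    using integrable_weighted_sigma2 integrable_var_act integrable_surv_pol_sq by simp
  ultimately show "integrable (obs_law M p0 K) (\<lambda>z. (on_record t ips_term z)\<^sup>2)"
    "(\<integral>z. (on_record t ips_term z)\<^sup>2 \<partial>obs_law M p0 K)
       = (\<integral>x. (\<Sum>a\<in>UNIV. p0 x a * ((iw pe p0 x a)\<^sup>2 * sigma2 K x a t)) \<partial>M)
         + (\<integral>x. var_act p0 x (\<lambda>a. iw pe p0 x a * surv K x a t) \<partial>M)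
         + (\<integral>x. (surv_pol pe K x t)\<^sup>2 \<partial>M)"
    using integral_obs_law_on_record[of "\<lambda>x a b. (ips_term x a b)\<^sup>2"]
      integrable_weighted_sigma2 integrable_var_act integrable_surv_pol_sq
    by (simp_all add: on_record_comp[where f="\<lambda>y. y\<^sup>2"])
qed

lemma on_record_dr_term:
  "on_record t dr_term = (\<lambda>z. on_record t ips_term z + on_record t (\<lambda>x a b. surv_pol pe K x t) z
     - on_record t (\<lambda>x a b. iw pe p0 x a * surv K x a t) z)"
  by (simp add: on_record_def dr_term_def ips_term_def right_diff_distrib fun_eq_iff split: prod.split)

lemma dr_record_moments:
  "integrable (obs_law M p0 K) (on_record t dr_term)"
  "(\<integral>z. on_record t dr_term z \<partial>obs_law M p0 K) = (\<integral>x. surv_pol pe K x t \<partial>M)"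
  "integrable (obs_law M p0 K) (\<lambda>z. (on_record t dr_term z)\<^sup>2)"
  "(\<integral>z. (on_record t dr_term z)\<^sup>2 \<partial>obs_law M p0 K)
     = (\<integral>x. (\<Sum>a\<in>UNIV. p0 x a * ((iw pe p0 x a)\<^sup>2 * sigma2 K x a t)) \<partial>M)
       + (\<integral>x. (surv_pol pe K x t)\<^sup>2 \<partial>M)"
proof -
  have "mean_given_context t (\<lambda>x a b. surv_pol pe K x t) x = surv_pol pe K x t"
    if x: "x \<in> space M" for x
    using is_policy_sum[OF policy_p0 x] by (simp add: mean_given_context_const sum_distrib_right[symmetric])
  from integral_obs_law_on_record[OF _ _ this integrable_surv_pol]
  have baseline: "integrable (obs_law M p0 K) (on_record t (\<lambda>x a b. surv_pol pe K x t))"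
    "(\<integral>z. on_record t (\<lambda>x a b. surv_pol pe K x t) z \<partial>obs_law M p0 K)
       = (\<integral>x. surv_pol pe K x t \<partial>M)"
    using surv_pol_bounds by auto
  have "mean_given_context t (\<lambda>x a b. iw pe p0 x a * surv K x a t) x = surv_pol pe K x t"
    if x: "x \<in> space M" for x
    using weighted_surv_mean[OF x] by (simp add: mean_given_context_const)
  from integral_obs_law_on_record[OF _ _ this integrable_surv_pol]
  have weighted: "integrable (obs_law M p0 K) (on_record t (\<lambda>x a b. iw pe p0 x a * surv K x a t))"
    "(\<integral>z. on_record t (\<lambda>x a b. iw pe p0 x a * surv K x a t) z \<partial>obs_law M p0 K)
       = (\<integral>x. surv_pol pe K x t \<partial>M)"
    using iw_nonneg surv_bounds by auto
  show "integrable (obs_law M p0 K) (on_record t dr_term)"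
    "(\<integral>z. on_record t dr_term z \<partial>obs_law M p0 K) = (\<integral>x. surv_pol pe K x t \<partial>M)"
    using ips_record_moments(1,2) baseline weighted by (simp_all add: on_record_dr_term)
  have "integrable M (\<lambda>x. (\<Sum>a\<in>UNIV. p0 x a * ((iw pe p0 x a)\<^sup>2 * sigma2 K x a t))
      + (surv_pol pe K x t)\<^sup>2)"
    using integrable_weighted_sigma2 integrable_surv_pol_sq by simp
  then show "integrable (obs_law M p0 K) (\<lambda>z. (on_record t dr_term z)\<^sup>2)"
    "(\<integral>z. (on_record t dr_term z)\<^sup>2 \<partial>obs_law M p0 K)
       = (\<integral>x. (\<Sum>a\<in>UNIV. p0 x a * ((iw pe p0 x a)\<^sup>2 * sigma2 K x a t)) \<partial>M)
         + (\<integral>x. (surv_pol pe K x t)\<^sup>2 \<partial>M)"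
    using integral_obs_law_on_record[of "\<lambda>x a b. (dr_term x a b)\<^sup>2", OF _ _ mean_given_context_dr_sq]
      integrable_weighted_sigma2 integrable_surv_pol_sq
    by (simp_all add: on_record_comp[where f="\<lambda>y. y\<^sup>2"])
qed

lemma variance_V_ips:
  assumes n: "1 \<le> n"
  shows "real n * prob_space.variance (data_law n M p0 K) (V_ips n pe p0 K t)
    = (\<integral>x. (\<Sum>a\<in>UNIV. p0 x a * ((iw pe p0 x a)\<^sup>2 * sigma2 K x a t)) \<partial>M)
      + (\<integral>x. var_act p0 x (\<lambda>a. iw pe p0 x a * surv K x a t) \<partial>M)
      + variance (\<lambda>x. surv_pol pe K x t)"
proof -
  interpret Q: prob_space "obs_law M p0 K"
    by (rule prob_space_obs_law)
  have "real n * prob_space.variance (data_law n M p0 K) (V_ips n pe p0 K t)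
      = Q.variance (on_record t ips_term)"
    unfolding data_law_def V_ips_eq
    using prob_space_obs_law ips_record_moments(1,3) n by (rule variance_sample_mean)
  then show ?thesis
    using Q.variance_eq[OF ips_record_moments(1,3)] ips_record_moments(2,4)
      variance_eq[OF integrable_surv_pol integrable_surv_pol_sq]
    by simp
qed

lemma variance_V_dr:
  assumes n: "1 \<le> n"
  shows "real n * prob_space.variance (data_law n M p0 K) (V_dr n pe p0 K t)
    = (\<integral>x. (\<Sum>a\<in>UNIV. p0 x a * ((iw pe p0 x a)\<^sup>2 * sigma2 K x a t)) \<partial>M)
      + variance (\<lambda>x. surv_pol pe K x t)"
proof -
  interpret Q: prob_space "obs_law M p0 K"
    by (rule prob_space_obs_law)
  have "real n * prob_space.variance (data_law n M p0 K) (V_dr n pe p0 K t)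
      = Q.variance (on_record t dr_term)"
    unfolding data_law_def V_dr_eq
    using prob_space_obs_law dr_record_moments(1,3) n by (rule variance_sample_mean)
  then show ?thesis
    using Q.variance_eq[OF dr_record_moments(1,3)] dr_record_moments(2,4)
      variance_eq[OF integrable_surv_pol integrable_surv_pol_sq]
    by simp
qed

end

theorem theorem2:
  fixes M :: "'x measure"
    and p0 pe :: "'x \<Rightarrow> 'a::finite \<Rightarrow> real"
    and K :: "'x \<Rightarrow> 'a \<Rightarrow> (real \<times> real) measure"
    and t :: real and n :: nat
  assumes P: "prob_space M"
    and pol0: "is_policy M p0" and pole: "is_policy M pe"
    and kern: "\<And>a. (\<lambda>x. K x a) \<in> measurable M (prob_algebra (borel \<Otimes>\<^sub>M borel))"
    and nonneg: "\<And>x a. x \<in> space M \<Longrightarrow> AE z in K x a. 0 \<le> fst z \<and> 0 \<le> snd z"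
    and t: "0 \<le> t" and n: "1 \<le> n"
    and support: "\<And>x a. x \<in> space M \<Longrightarrow> pe x a > 0 \<Longrightarrow> p0 x a > 0"
    and indep: "\<And>x a. x \<in> space M \<Longrightarrow>
                   K x a = distr (K x a) borel fst \<Otimes>\<^sub>M distr (K x a) borel snd"
    and Gpos: "\<And>x a. x \<in> space M \<Longrightarrow> cens K t x a > 0"
    and finvar: "integrable M (\<lambda>x. \<Sum>a\<in>UNIV. p0 x a * (iw pe p0 x a)\<^sup>2 * surv K x a t / cens K t x a)"
  shows
    "real n * prob_space.variance (data_law n M p0 K) (V_ips n pe p0 K t)
       = (\<integral>x. (\<Sum>a\<in>UNIV. p0 x a * ((iw pe p0 x a)\<^sup>2 * sigma2 K x a t)) \<partial>M)
         + (\<integral>x. var_act p0 x (\<lambda>a. iw pe p0 x a * surv K x a t) \<partial>M)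
         + prob_space.variance M (\<lambda>x. surv_pol pe K x t)
     \<and> real n * prob_space.variance (data_law n M p0 K) (V_dr n pe p0 K t)
       = (\<integral>x. (\<Sum>a\<in>UNIV. p0 x a * ((iw pe p0 x a)\<^sup>2 * sigma2 K x a t)) \<partial>M)
         + prob_space.variance M (\<lambda>x. surv_pol pe K x t)
     \<and> real n * prob_space.variance (data_law n M p0 K) (V_ips n pe p0 K t)
       - real n * prob_space.variance (data_law n M p0 K) (V_dr n pe p0 K t)
       = (\<integral>x. var_act p0 x (\<lambda>a. iw pe p0 x a * surv K x a t) \<partial>M)
     \<and> (\<integral>x. var_act p0 x (\<lambda>a. iw pe p0 x a * surv K x a t) \<partial>M) \<ge> 0
     \<and> prob_space.variance (data_law n M p0 K) (V_dr n pe p0 K t)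
       \<le> prob_space.variance (data_law n M p0 K) (V_ips n pe p0 K t)"
proof -
  interpret censored_off_policy M p0 K pe t
    using P pol0 kern indep pole support Gpos finvar
    by (simp add: censored_off_policy_def censored_off_policy_axioms_def censored_logging_def
        censored_logging_axioms_def)
  have var_act_integral_nonneg: "(\<integral>x. var_act p0 x (\<lambda>a. iw pe p0 x a * surv K x a t) \<partial>M) \<ge> 0"
    using is_policy_nonneg[OF pol0] is_policy_sum[OF pol0]
    by (intro Bochner_Integration.integral_nonneg var_act_nonneg) auto
  have "real n * prob_space.variance (data_law n M p0 K) (V_dr n pe p0 K t)
      \<le> real n * prob_space.variance (data_law n M p0 K) (V_ips n pe p0 K t)"
    using variance_V_ips[OF n] variance_V_dr[OF n] var_act_integral_nonneg by simp
  then have "prob_space.variance (data_law n M p0 K) (V_dr n pe p0 K t)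
      \<le> prob_space.variance (data_law n M p0 K) (V_ips n pe p0 K t)"
    using n by simp
  then show ?thesis
    using variance_V_ips[OF n] variance_V_dr[OF n] var_act_integral_nonneg by simp
qed

end
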